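(* Let $(R,\mathfrak m)$ be a zero-dimensional Gorenstein local ring and let $I\subseteq\mathfrak m$ be an ideal with $I^r\ne0$ and $I^{r+1}=0$. If the associated graded ring $G(I)=\bigoplus_{i\ge0}I^i/I^{i+1}$ is Gorenstein, then $I^i/I^{i+1}$ is a faithful $(R/I)$-module for $0\le i\le r$. *)

theory Defs
  imports "HOL-Algebra.Algebra"
begin

(* n-th power of an ideal, using the library's ideal product (I^0 = R) *)
definition ideal_pow :: "('a, 'b) ring_scheme \<Rightarrow> 'a set \<Rightarrow> nat \<Rightarrow> 'a set" where
  "ideal_pow R I n = I [^]\<^bsub>ideals_set R\<^esub> n"

definition socle :: "('a, 'b) ring_scheme \<Rightarrow> 'a set \<Rightarrow> 'a set" where
  "socle R m = {x \<in> carrier R. \<forall>y \<in> m. x \<otimes>\<^bsub>R\<^esub> y = \<zero>\<^bsub>R\<^esub>}"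

(* zero-dimensional (Noetherian, every prime maximal) local Gorenstein ring:
   the socle is one-dimensional over the residue field, i.e. a simple R-module *)
definition zero_dim_gorenstein_local :: "('a, 'b) ring_scheme \<Rightarrow> bool" where
  "zero_dim_gorenstein_local S \<longleftrightarrow>
     cring S \<and> noetherian_ring S \<and> (\<exists>!m. maximalideal m S) \<and>
     (\<forall>P. primeideal P S \<longrightarrow> maximalideal P S) \<and>
     (\<forall>m. maximalideal m S \<longrightarrow>
        socle S m \<noteq> {\<zero>\<^bsub>S\<^esub>} \<and>
        (\<forall>J. ideal J S \<and> J \<subseteq> socle S m \<longrightarrow> J = {\<zero>\<^bsub>S\<^esub>} \<or> J = socle S m))"

definition rep :: "'a set \<Rightarrow> 'a" where
  "rep A = (SOME a. a \<in> A)"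

(* associated graded ring G(I) = \<Oplus>_{i\<ge>0} I^i/I^{i+1}: elements are finitely supported
   sequences of cosets, the n-th entry lying in I^n/I^{n+1} *)
definition assoc_graded :: "('a, 'b) ring_scheme \<Rightarrow> 'a set \<Rightarrow> (nat \<Rightarrow> 'a set) ring" where
  "assoc_graded R I =
    \<lparr> carrier = {f. (\<forall>n. \<exists>a \<in> ideal_pow R I n. f n = a_r_coset R (ideal_pow R I (Suc n)) a)
                    \<and> finite {n. f n \<noteq> ideal_pow R I (Suc n)}},
      monoid.mult = (\<lambda>f g n. a_r_coset R (ideal_pow R I (Suc n))
                 (finsum R (\<lambda>i. rep (f i) \<otimes>\<^bsub>R\<^esub> rep (g (n - i))) {..n})),
      one = (\<lambda>n. if n = 0 then a_r_coset R (ideal_pow R I 1) \<one>\<^bsub>R\<^esub> else ideal_pow R I (Suc n)),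
      ring.zero = (\<lambda>n. ideal_pow R I (Suc n)),
      ring.add = (\<lambda>f g n. a_r_coset R (ideal_pow R I (Suc n)) (rep (f n) \<oplus>\<^bsub>R\<^esub> rep (g n))) \<rparr>"

definition ann_quot :: "('a, 'b) ring_scheme \<Rightarrow> 'a set \<Rightarrow> 'a set \<Rightarrow> 'a set" where
  "ann_quot R M N = {a \<in> carrier R. \<forall>x \<in> M. a \<otimes>\<^bsub>R\<^esub> x \<in> N}"

(* M/N (with I*M \<subseteq> N) is a faithful R/I-module: its R-annihilator is exactly I *)
definition faithful_over_quot :: "('a, 'b) ring_scheme \<Rightarrow> 'a set \<Rightarrow> 'a set \<Rightarrow> 'a set \<Rightarrow> bool" where
  "faithful_over_quot R I M N \<longleftrightarrow> ann_quot R M N = I"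

end

theory Submission
  imports Defs
begin

text \<open>
  If \<open>a\<close> annihilates \<open>I\<^sup>i/I\<^sup>i\<^sup>+\<^sup>1\<close>, it also annihilates \<open>I\<^sup>r/I\<^sup>r\<^sup>+\<^sup>1\<close>. Suppose moreover \<open>a \<notin> I\<close>, so that
  the class \<open>a\<^sup>*\<close> of \<open>a\<close> in degree \<open>0\<close> of \<open>G(I)\<close> is nonzero. In the Artinian Gorenstein ring \<open>G(I)\<close>
  every nonzero element has a nonzero multiple in the socle, and the socle is simple, so the socle
  lies in every nonzero principal ideal. A nonzero socle element \<open>s\<close> is therefore a multiple both of
  \<open>a\<^sup>*\<close> and of the class \<open>c\<^sup>*\<close> of some nonzero \<open>c \<in> I\<^sup>r\<close> in degree \<open>r\<close>. Being a multiple of \<open>c\<^sup>*\<close>, \<open>s\<close>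
  is concentrated in degree \<open>r\<close> (as \<open>I\<^sup>r\<^sup>+\<^sup>1 = 0\<close>); being a multiple of \<open>a\<^sup>*\<close>, its degree \<open>r\<close>
  part vanishes because \<open>a I\<^sup>r \<subseteq> I\<^sup>r\<^sup>+\<^sup>1\<close>. Hence \<open>s = 0\<close>, a contradiction.
\<close>

section \<open>Powers of an ideal\<close>

lemma (in ring) ideal_pow_0 [simp]: "ideal_pow R I 0 = carrier R"
  by (simp add: ideal_pow_def ideals_set_def)

lemma (in ring) ideal_pow_Suc: "ideal_pow R I (Suc n) = ideal_pow R I n \<cdot> I"
  by (simp add: ideal_pow_def ideals_set_def)

lemma (in ring) ideal_ideal_pow: "ideal I R \<Longrightarrow> ideal (ideal_pow R I n) R"
  by (induct n) (simp_all add: ideal_pow_Suc ideal_prod_is_ideal oneideal)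

lemma (in ring) zero_mem_ideal_pow: "ideal I R \<Longrightarrow> \<zero> \<in> ideal_pow R I n"
  by (rule additive_subgroup.zero_closed[OF ideal.axioms(1)[OF ideal_ideal_pow]])

lemma (in ring) ideal_pow_Suc_subset: "ideal I R \<Longrightarrow> ideal_pow R I (Suc n) \<subseteq> ideal_pow R I n"
  using ideal_prod_inter[OF ideal_ideal_pow] by (simp add: ideal_pow_Suc)

lemma (in ring) ideal_pow_antimono:
  assumes "ideal I R" "k \<le> n"
  shows "ideal_pow R I n \<subseteq> ideal_pow R I k"
  using assms(2) by (induct n rule: dec_induct) (use ideal_pow_Suc_subset[OF assms(1)] in blast)+

lemma (in cring) ideal_pow_add:
  assumes "ideal I R"
  shows "ideal_pow R I (k + l) = ideal_pow R I k \<cdot> ideal_pow R I l"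
proof -
  interpret ideals: comm_monoid "ideals_set R" by (rule ideals_set_is_comm_monoid)
  have "I \<in> carrier (ideals_set R)" using assms by (simp add: ideals_set_def)
  then show ?thesis
    unfolding ideal_pow_def by (simp add: ideals.nat_pow_mult[symmetric]) (simp add: ideals_set_def)
qed

lemma (in cring) ideal_pow_1: "ideal I R \<Longrightarrow> ideal_pow R I 1 = I"
  using ideal_prod_one by (simp add: ideal_pow_Suc ideal_prod_commute oneideal)

lemma (in cring) ideal_pow_mult_mem:
  "ideal I R \<Longrightarrow> a \<in> ideal_pow R I k \<Longrightarrow> b \<in> ideal_pow R I l \<Longrightarrow>
    a \<otimes> b \<in> ideal_pow R I (k + l)"
  by (simp add: ideal_pow_add ideal_prod.prod)

lemma (in ring) mult_ideal_prod_subset: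
  assumes "ideal J R" "ideal L R" "a \<in> carrier R" "\<And>x. x \<in> J \<Longrightarrow> a \<otimes> x \<in> K"
    and "x \<in> J \<cdot> L"
  shows "a \<otimes> x \<in> K \<cdot> L"
  using assms(5)
proof (induct x rule: ideal_prod.induct)
  case (prod i j)
  then have "a \<otimes> (i \<otimes> j) = (a \<otimes> i) \<otimes> j"
    using assms(1-3) by (simp add: ideal.Icarr m_assoc)
  then show ?case using prod assms(4) by (simp add: ideal_prod.prod)
next
  case (sum s1 s2)
  then have "a \<otimes> (s1 \<oplus> s2) = a \<otimes> s1 \<oplus> a \<otimes> s2"
    using assms(1-3) ideal_prod_in_carrier by (blast intro: r_distr)
  then show ?case using sum by (simp add: ideal_prod.sum)
qed

lemma (in cring) ideal_subset_ann_quot_ideal_pow: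
  assumes "ideal I R"
  shows "I \<subseteq> ann_quot R (ideal_pow R I n) (ideal_pow R I (Suc n))"
proof
  fix a assume a: "a \<in> I"
  have "a \<otimes> x \<in> ideal_pow R I (Suc n)" if x: "x \<in> ideal_pow R I n" for x
  proof -
    have "x \<otimes> a \<in> ideal_pow R I (Suc n)" using a x by (simp add: ideal_pow_Suc ideal_prod.prod)
    then show ?thesis
      using a x ideal.Icarr[OF assms] ideal.Icarr[OF ideal_ideal_pow[OF assms]] by (simp add: m_comm)
  qed
  then show "a \<in> ann_quot R (ideal_pow R I n) (ideal_pow R I (Suc n))"
    unfolding ann_quot_def using ideal.Icarr[OF assms a] by blast
qed

lemma (in cring) ann_quot_ideal_pow_mono:
  assumes "ideal I R" "i \<le> n"
  shows "ann_quot R (ideal_pow R I i) (ideal_pow R I (Suc i))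
     \<subseteq> ann_quot R (ideal_pow R I n) (ideal_pow R I (Suc n))"
proof
  fix a assume a: "a \<in> ann_quot R (ideal_pow R I i) (ideal_pow R I (Suc i))"
  have "a \<otimes> x \<in> ideal_pow R I (Suc n)" if x: "x \<in> ideal_pow R I n" for x
  proof -
    have "x \<in> ideal_pow R I i \<cdot> ideal_pow R I (n - i)"
      using assms x ideal_pow_add[of I i "n - i"] by simp
    then have "a \<otimes> x \<in> ideal_pow R I (Suc i) \<cdot> ideal_pow R I (n - i)"
      using assms a unfolding ann_quot_def
      by (intro mult_ideal_prod_subset[OF ideal_ideal_pow ideal_ideal_pow]) auto
    then show ?thesis using assms ideal_pow_add[of I "Suc i" "n - i"] by simp
  qed
  then show "a \<in> ann_quot R (ideal_pow R I n) (ideal_pow R I (Suc n))"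
    using a unfolding ann_quot_def by blast
qed

section \<open>The socle of a zero-dimensional Gorenstein ring\<close>

lemma (in noetherian_ring) exists_maximal_ideal_in_family:
  assumes "\<F> \<noteq> {}" "\<F> \<subseteq> {J. ideal J R}"
  shows "\<exists>J\<in>\<F>. \<forall>K\<in>\<F>. J \<subseteq> K \<longrightarrow> K = J"
proof (rule subset_Zorn_nonempty[OF assms(1)])
  fix \<C> assume \<C>: "\<C> \<noteq> {}" "subset.chain \<F> \<C>"
  then have "subset.chain {J. ideal J R} \<C>"
    using assms(2) unfolding subset_chain_def by blast
  then have "\<Union>\<C> \<in> \<C>" by (rule ideal_chain_is_trivial[OF \<C>(1)])
  then show "\<Union>\<C> \<in> \<F>" using \<C>(2) unfolding subset_chain_def by blast
qed

text \<open>For an arbitrary set \<open>S\<close>, \<open>socle R S\<close> is the annihilator \<open>(0 :\<^sub>R S)\<close>.\<close>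

lemma (in cring) ideal_socle:
  assumes "S \<subseteq> carrier R"
  shows "ideal (socle R S) R"
proof (rule idealI[OF ring_axioms])
  have S: "\<And>y. y \<in> S \<Longrightarrow> y \<in> carrier R" using assms by blast
  show "subgroup (socle R S) (add_monoid R)"
  proof (rule add.subgroupI)
    show "socle R S \<subseteq> carrier R" "socle R S \<noteq> {}"
      using S by (auto simp: socle_def intro!: exI[of _ \<zero>])
    show "\<ominus> a \<in> socle R S" if "a \<in> socle R S" for a
      using that S by (simp add: socle_def l_minus)
    show "a \<oplus> b \<in> socle R S" if "a \<in> socle R S" "b \<in> socle R S" for a b
      using that S by (simp add: socle_def l_distr)
  qed
  show "x \<otimes> a \<in> socle R S" if "a \<in> socle R S" "x \<in> carrier R" for a x
    using that S by (simp add: socle_def m_assoc)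
  then show "a \<otimes> x \<in> socle R S" if "a \<in> socle R S" "x \<in> carrier R" for a x
    using that by (simp add: socle_def m_comm)
qed

text \<open>The annihilator of a nonzero multiple of \<open>x\<close> that is maximal among such annihilators is an
  associated prime, hence equal to \<open>M\<close>.\<close>

lemma (in cring) exists_socle_multiple:
  assumes "noetherian_ring R" "\<And>P. primeideal P R \<Longrightarrow> P = M"
    and x: "x \<in> carrier R" "x \<noteq> \<zero>"
  shows "\<exists>y\<in>carrier R. x \<otimes> y \<noteq> \<zero> \<and> x \<otimes> y \<in> socle R M"
proof -
  define \<F> where "\<F> = (\<lambda>y. socle R {x \<otimes> y}) ` {y \<in> carrier R. x \<otimes> y \<noteq> \<zero>}"
  have "\<F> \<noteq> {}" using x unfolding \<F>_def by (auto intro!: exI[of _ \<one>])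
  moreover have "\<F> \<subseteq> {J. ideal J R}" using x unfolding \<F>_def by (auto intro: ideal_socle)
  ultimately obtain J where "J \<in> \<F>" and max: "\<And>K. K \<in> \<F> \<Longrightarrow> J \<subseteq> K \<Longrightarrow> K = J"
    using noetherian_ring.exists_maximal_ideal_in_family[OF assms(1)] by meson
  then obtain y where y: "y \<in> carrier R" "x \<otimes> y \<noteq> \<zero>" and J: "J = socle R {x \<otimes> y}"
    unfolding \<F>_def by blast
  define z where "z = x \<otimes> y"
  have z: "z \<in> carrier R" "z \<noteq> \<zero>" using x y unfolding z_def by auto
  have "primeideal (socle R {z}) R"
  proof (rule primeidealI[OF ideal_socle is_cring])
    show "{z} \<subseteq> carrier R" using z by simp
    have "\<one> \<notin> socle R {z}" using z by (simp add: socle_def)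
    then show "carrier R \<noteq> socle R {z}" by blast
    show "a \<in> socle R {z} \<or> b \<in> socle R {z}"
      if ab: "a \<in> carrier R" "b \<in> carrier R" "a \<otimes> b \<in> socle R {z}" for a b
    proof (rule disjCI)
      assume "b \<notin> socle R {z}"
      then have "x \<otimes> (y \<otimes> b) \<noteq> \<zero>"
        using ab(2) x y by (simp add: socle_def z_def m_assoc m_comm[of b])
      then have "socle R {x \<otimes> (y \<otimes> b)} \<in> \<F>"
        using y ab(2) unfolding \<F>_def by blast
      moreover have "J \<subseteq> socle R {x \<otimes> (y \<otimes> b)}"
        using x y ab(2) unfolding J by (auto simp: socle_def m_assoc[symmetric])
      ultimately have eq: "socle R {x \<otimes> (y \<otimes> b)} = socle R {z}"
        using max J z_def by blast
      have "a \<otimes> (x \<otimes> (y \<otimes> b)) = (a \<otimes> b) \<otimes> z"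
        using ab x y by (simp add: z_def m_ac)
      then have "a \<in> socle R {x \<otimes> (y \<otimes> b)}"
        using ab z(1) by (simp add: socle_def)
      then show "a \<in> socle R {z}" by (simp only: eq)
    qed
  qed
  then have "socle R {z} = M" by (rule assms(2))
  then have "z \<in> socle R M" using z(1) by (auto simp: socle_def m_comm)
  then show ?thesis using y z unfolding z_def by blast
qed

lemma zero_dim_gorenstein_local_socle_subset_cgenideal:
  assumes G: "zero_dim_gorenstein_local S" and M: "maximalideal M S"
    and x: "x \<in> carrier S" "x \<noteq> \<zero>\<^bsub>S\<^esub>"
  shows "socle S M \<subseteq> PIdl\<^bsub>S\<^esub> x"
proof -
  interpret cring S using G by (simp add: zero_dim_gorenstein_local_def)
  have primes: "\<And>P. primeideal P S \<Longrightarrow> P = M"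
    and simple: "\<And>J. ideal J S \<Longrightarrow> J \<subseteq> socle S M \<Longrightarrow> J = {\<zero>\<^bsub>S\<^esub>} \<or> J = socle S M"
    using G M unfolding zero_dim_gorenstein_local_def by blast+
  have "M \<subseteq> carrier S" using ideal.Icarr[OF maximalideal.axioms(1)[OF M]] by blast
  obtain y where y: "y \<in> carrier S" "x \<otimes>\<^bsub>S\<^esub> y \<noteq> \<zero>\<^bsub>S\<^esub>" "x \<otimes>\<^bsub>S\<^esub> y \<in> socle S M"
    using exists_socle_multiple[OF _ primes x] G unfolding zero_dim_gorenstein_local_def by blast
  have "PIdl\<^bsub>S\<^esub> (x \<otimes>\<^bsub>S\<^esub> y) \<subseteq> socle S M"
    using y x \<open>M \<subseteq> carrier S\<close> by (intro cgenideal_minimal ideal_socle) auto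
  moreover have "PIdl\<^bsub>S\<^esub> (x \<otimes>\<^bsub>S\<^esub> y) \<noteq> {\<zero>\<^bsub>S\<^esub>}"
    using cgenideal_self[of "x \<otimes>\<^bsub>S\<^esub> y"] x y by auto
  ultimately have "socle S M = PIdl\<^bsub>S\<^esub> (x \<otimes>\<^bsub>S\<^esub> y)"
    using simple cgenideal_ideal[of "x \<otimes>\<^bsub>S\<^esub> y"] x(1) y(1) by blast
  also have "\<dots> \<subseteq> PIdl\<^bsub>S\<^esub> x"
  proof (rule cgenideal_minimal[OF cgenideal_ideal[OF x(1)]])
    show "x \<otimes>\<^bsub>S\<^esub> y \<in> PIdl\<^bsub>S\<^esub> x"
      using x(1) y(1) m_comm unfolding cgenideal_def by blast
  qed
  finally show ?thesis .
qed

section \<open>The associated graded ring\<close>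

lemma rep_mem: "A \<noteq> {} \<Longrightarrow> rep A \<in> A"
  unfolding rep_def by (simp add: some_in_eq)

lemma assoc_graded_carrier_iff:
  "f \<in> carrier (assoc_graded R I) \<longleftrightarrow>
     (\<forall>n. \<exists>a \<in> ideal_pow R I n. f n = ideal_pow R I (Suc n) +>\<^bsub>R\<^esub> a)
     \<and> finite {n. f n \<noteq> ideal_pow R I (Suc n)}"
  by (simp add: assoc_graded_def)

lemma assoc_graded_mult:
  "f \<otimes>\<^bsub>assoc_graded R I\<^esub> g =
     (\<lambda>n. ideal_pow R I (Suc n) +>\<^bsub>R\<^esub> (\<Oplus>\<^bsub>R\<^esub>k\<in>{..n}. rep (f k) \<otimes>\<^bsub>R\<^esub> rep (g (n - k))))"
  by (simp add: assoc_graded_def)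

lemma assoc_graded_zero: "\<zero>\<^bsub>assoc_graded R I\<^esub> = (\<lambda>n. ideal_pow R I (Suc n))"
  by (simp add: assoc_graded_def)

definition graded_class :: "('a, 'b) ring_scheme \<Rightarrow> 'a set \<Rightarrow> nat \<Rightarrow> 'a \<Rightarrow> nat \<Rightarrow> 'a set" where
  "graded_class R I n c = (\<lambda>k. ideal_pow R I (Suc k) +>\<^bsub>R\<^esub> (if k = n then c else \<zero>\<^bsub>R\<^esub>))"

lemma (in ring) finsum_mem_ideal:
  assumes "ideal J R" "finite A" "\<And>k. k \<in> A \<Longrightarrow> f k \<in> J"
  shows "(\<Oplus>k\<in>A. f k) \<in> J"
  using assms(2,3)
proof (induct A rule: finite_induct)
  case empty
  then show ?case using additive_subgroup.zero_closed[OF ideal.axioms(1)[OF assms(1)]] by simp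
next
  case (insert k A)
  then have "f \<in> A \<rightarrow> carrier R" "f k \<in> carrier R" using ideal.Icarr[OF assms(1)] by auto
  then show ?case
    using insert assms(1) by (simp add: additive_subgroup.a_closed ideal.axioms(1))
qed

context cring
begin

lemma rep_a_r_coset_mem:
  assumes "ideal J R" "b \<in> carrier R"
  shows "rep (J +> b) \<in> J +> b"
  using assms additive_subgroup.zero_closed[OF ideal.axioms(1)[OF assms(1)]]
  by (intro rep_mem) (force simp: a_r_coset_def')

lemma rep_component_mem:
  assumes "ideal I R" "f \<in> carrier (assoc_graded R I)"
  shows "rep (f n) \<in> ideal_pow R I n"
proof -
  obtain b where b: "b \<in> ideal_pow R I n" "f n = ideal_pow R I (Suc n) +> b"
    using assms(2) unfolding assoc_graded_carrier_iff by blast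
  have "h \<oplus> b \<in> ideal_pow R I n" if "h \<in> ideal_pow R I (Suc n)" for h
    using that ideal_pow_Suc_subset[OF assms(1)] b(1)
    by (blast intro: additive_subgroup.a_closed[OF ideal.axioms(1)[OF ideal_ideal_pow[OF assms(1)]]])
  then have "ideal_pow R I (Suc n) +> b \<subseteq> ideal_pow R I n"
    by (auto simp: a_r_coset_def')
  moreover have "rep (f n) \<in> ideal_pow R I (Suc n) +> b"
    unfolding b(2) using assms(1) b(1)
    by (intro rep_a_r_coset_mem ideal_ideal_pow ideal.Icarr[OF ideal_ideal_pow])
  ultimately show ?thesis by blast
qed

lemma assoc_graded_mult_component_eq_zero:
  assumes "ideal I R"
    and "\<And>k. k \<le> n \<Longrightarrow> rep (f k) \<otimes> rep (g (n - k)) \<in> ideal_pow R I (Suc n)"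
  shows "(f \<otimes>\<^bsub>assoc_graded R I\<^esub> g) n = ideal_pow R I (Suc n)"
proof -
  have "(\<Oplus>k\<in>{..n}. rep (f k) \<otimes> rep (g (n - k))) \<in> ideal_pow R I (Suc n)"
    using assms(2) by (intro finsum_mem_ideal[OF ideal_ideal_pow[OF assms(1)]]) auto
  then show ?thesis
    unfolding assoc_graded_mult by (simp add: a_rcos_zero[OF ideal_ideal_pow[OF assms(1)]])
qed

lemma mult_rep_ideal_pow_mem:
  assumes "ideal I R" "x \<in> ideal_pow R I j"
  shows "x \<otimes> rep (ideal_pow R I (Suc k)) \<in> ideal_pow R I (Suc (j + k))"
proof -
  have "rep (ideal_pow R I (Suc k)) \<in> ideal_pow R I (Suc k)"
    using zero_mem_ideal_pow[OF assms(1)] by (metis empty_iff rep_mem)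
  from ideal_pow_mult_mem[OF assms this] show ?thesis by simp
qed

lemma graded_class_component:
  "ideal I R \<Longrightarrow> k \<noteq> n \<Longrightarrow> graded_class R I n c k = ideal_pow R I (Suc k)"
  by (simp add: graded_class_def a_rcos_zero ideal_ideal_pow zero_mem_ideal_pow)

lemma graded_class_carrier:
  assumes "ideal I R" "c \<in> ideal_pow R I n"
  shows "graded_class R I n c \<in> carrier (assoc_graded R I)"
proof -
  have "{k. graded_class R I n c k \<noteq> ideal_pow R I (Suc k)} \<subseteq> {n}"
    using graded_class_component[OF assms(1)] by blast
  then have "finite {k. graded_class R I n c k \<noteq> ideal_pow R I (Suc k)}"
    by (rule finite_subset) simp
  moreover have "(if k = n then c else \<zero>) \<in> ideal_pow R I k" for k
    using assms zero_mem_ideal_pow by simp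
  then have "\<forall>k. \<exists>a \<in> ideal_pow R I k. graded_class R I n c k = ideal_pow R I (Suc k) +> a"
    unfolding graded_class_def by blast
  ultimately show ?thesis unfolding assoc_graded_carrier_iff by blast
qed

lemma graded_class_eq_zero_iff:
  assumes "ideal I R" "c \<in> carrier R"
  shows "graded_class R I n c = \<zero>\<^bsub>assoc_graded R I\<^esub> \<longleftrightarrow> c \<in> ideal_pow R I (Suc n)"
proof
  assume "graded_class R I n c = \<zero>\<^bsub>assoc_graded R I\<^esub>"
  then have "graded_class R I n c n = ideal_pow R I (Suc n)" by (simp add: assoc_graded_zero)
  then have "ideal_pow R I (Suc n) +> c = ideal_pow R I (Suc n)" by (simp add: graded_class_def)
  then show "c \<in> ideal_pow R I (Suc n)"
    by (rule ideal.rcos_const_imp_mem[OF ideal_ideal_pow[OF assms(1)] assms(2)])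
next
  assume "c \<in> ideal_pow R I (Suc n)"
  then have "graded_class R I n c k = ideal_pow R I (Suc k)" for k
    using graded_class_component[OF assms(1)]
    by (cases "k = n") (simp_all add: graded_class_def a_rcos_zero ideal_ideal_pow[OF assms(1)])
  then show "graded_class R I n c = \<zero>\<^bsub>assoc_graded R I\<^esub>"
    by (simp add: assoc_graded_zero fun_eq_iff)
qed

lemma assoc_graded_mult_component_low_degree:
  assumes "ideal I R" "f \<in> carrier (assoc_graded R I)"
    and "\<And>k. k < d \<Longrightarrow> g k = ideal_pow R I (Suc k)" "n < d"
  shows "(f \<otimes>\<^bsub>assoc_graded R I\<^esub> g) n = ideal_pow R I (Suc n)"
proof (rule assoc_graded_mult_component_eq_zero[OF assms(1)])
  fix k assume "k \<le> n"
  have "n - k < d" using assms(4) by simp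
  then show "rep (f k) \<otimes> rep (g (n - k)) \<in> ideal_pow R I (Suc n)"
    using mult_rep_ideal_pow_mem[OF assms(1) rep_component_mem[OF assms(1,2)], of k "n - k"]
      assms(3) \<open>k \<le> n\<close> by simp
qed

lemma assoc_graded_mult_graded_class_0_component:
  assumes "ideal I R" "f \<in> carrier (assoc_graded R I)"
    and "a \<in> ann_quot R (ideal_pow R I d) (ideal_pow R I (Suc d))"
  shows "(f \<otimes>\<^bsub>assoc_graded R I\<^esub> graded_class R I 0 a) d = ideal_pow R I (Suc d)"
proof (rule assoc_graded_mult_component_eq_zero[OF assms(1)])
  fix k assume "k \<le> d"
  show "rep (f k) \<otimes> rep (graded_class R I 0 a (d - k)) \<in> ideal_pow R I (Suc d)"
  proof (cases "k = d")
    case True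
    have a: "a \<in> carrier R" "\<And>x. x \<in> ideal_pow R I d \<Longrightarrow> a \<otimes> x \<in> ideal_pow R I (Suc d)"
      using assms(3) by (auto simp: ann_quot_def)
    have x: "rep (f d) \<in> ideal_pow R I d" by (rule rep_component_mem[OF assms(1,2)])
    obtain h where h: "h \<in> ideal_pow R I 1" "rep (graded_class R I 0 a 0) = h \<oplus> a"
      using rep_a_r_coset_mem[OF ideal_ideal_pow[OF assms(1)] a(1), of 1]
      by (auto simp: graded_class_def a_r_coset_def')
    have "rep (f d) \<otimes> (h \<oplus> a) = rep (f d) \<otimes> h \<oplus> a \<otimes> rep (f d)"
      using x h(1) a(1) ideal.Icarr[OF ideal_ideal_pow[OF assms(1)]]
      by (simp add: r_distr m_comm)
    moreover have "rep (f d) \<otimes> h \<in> ideal_pow R I (Suc d)"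
      using ideal_pow_mult_mem[OF assms(1) x h(1)] by simp
    ultimately show ?thesis
      using True h(2) a(2)[OF x]
      by (simp add: additive_subgroup.a_closed ideal.axioms(1) ideal_ideal_pow[OF assms(1)])
  next
    case False
    then have "d - k \<noteq> 0" using \<open>k \<le> d\<close> by simp
    then show ?thesis
      using mult_rep_ideal_pow_mem[OF assms(1) rep_component_mem[OF assms(1,2)], of k "d - k"]
        graded_class_component[OF assms(1)] \<open>k \<le> d\<close> by simp
  qed
qed

lemma assoc_graded_component_high_degree:
  assumes "ideal I R" "ideal_pow R I (Suc r) = {\<zero>}" "f \<in> carrier (assoc_graded R I)" "r < n"
  shows "f n = ideal_pow R I (Suc n)"
proof -
  have "ideal_pow R I n = {\<zero>}"
    using ideal_pow_antimono[OF assms(1), of "Suc r" n] assms(2,4) zero_mem_ideal_pow[OF assms(1)]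
    by fastforce
  then show ?thesis
    using assms(1,3) unfolding assoc_graded_carrier_iff
    by (metis a_rcos_zero ideal_ideal_pow zero_mem_ideal_pow singletonD)
qed

lemma assoc_graded_mult_graded_class_top_component:
  assumes "ideal I R" "ideal_pow R I (Suc r) = {\<zero>}" "f \<in> carrier (assoc_graded R I)"
    and "f \<otimes>\<^bsub>assoc_graded R I\<^esub> graded_class R I r c \<in> carrier (assoc_graded R I)" "n \<noteq> r"
  shows "(f \<otimes>\<^bsub>assoc_graded R I\<^esub> graded_class R I r c) n = ideal_pow R I (Suc n)"
proof (cases "n < r")
  case True
  then show ?thesis
    by (intro assoc_graded_mult_component_low_degree[OF assms(1,3), where d = r]
        graded_class_component[OF assms(1)]) simp_all
next
  case False
  with assms(5) show ?thesis
    by (intro assoc_graded_component_high_degree[OF assms(1,2,4)]) simp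
qed

end

lemma (in cring) ann_quot_top_ideal_pow_subset:
  assumes I: "ideal I R" and top: "ideal_pow R I r \<noteq> {\<zero>}" "ideal_pow R I (Suc r) = {\<zero>}"
    and G: "zero_dim_gorenstein_local (assoc_graded R I)"
  shows "ann_quot R (ideal_pow R I r) (ideal_pow R I (Suc r)) \<subseteq> I"
proof
  fix a assume a: "a \<in> ann_quot R (ideal_pow R I r) (ideal_pow R I (Suc r))"
  let ?G = "assoc_graded R I"
  interpret G: cring ?G using G by (simp add: zero_dim_gorenstein_local_def)
  obtain M where M: "maximalideal M ?G"
    using G unfolding zero_dim_gorenstein_local_def by blast
  then have socle_nonzero: "socle ?G M \<noteq> {\<zero>\<^bsub>?G\<^esub>}"
    using G unfolding zero_dim_gorenstein_local_def by blast
  have "ideal (socle ?G M) ?G"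
    using G.ideal_socle ideal.Icarr[OF maximalideal.axioms(1)[OF M]] by blast
  then obtain s where s: "s \<in> socle ?G M" "s \<noteq> \<zero>\<^bsub>?G\<^esub>"
    using socle_nonzero additive_subgroup.zero_closed[OF ideal.axioms(1)[OF \<open>ideal (socle ?G M) ?G\<close>]]
    by blast
  have "s \<in> carrier ?G" using s(1) by (simp add: socle_def)
  obtain c where c: "c \<in> ideal_pow R I r" "c \<noteq> \<zero>"
    using top(1) zero_mem_ideal_pow[OF I] by blast
  have "c \<notin> ideal_pow R I (Suc r)" using c(2) top(2) by simp
  then have "graded_class R I r c \<noteq> \<zero>\<^bsub>?G\<^esub>"
    using graded_class_eq_zero_iff[OF I ideal.Icarr[OF ideal_ideal_pow[OF I] c(1)]] by blast
  then obtain z where z: "z \<in> carrier ?G" "s = z \<otimes>\<^bsub>?G\<^esub> graded_class R I r c"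
    using zero_dim_gorenstein_local_socle_subset_cgenideal[OF G M graded_class_carrier[OF I c(1)]] s(1)
    unfolding cgenideal_def by blast
  have off_top: "s n = ideal_pow R I (Suc n)" if "n \<noteq> r" for n
    using assoc_graded_mult_graded_class_top_component[OF I top(2) z(1)] \<open>s \<in> carrier ?G\<close> that
    unfolding z(2) by blast
  show "a \<in> I"
  proof (rule ccontr)
    assume "a \<notin> I"
    have "a \<in> carrier R" using a by (simp add: ann_quot_def)
    then have "graded_class R I 0 a \<noteq> \<zero>\<^bsub>?G\<^esub>"
      using \<open>a \<notin> I\<close> graded_class_eq_zero_iff[OF I] ideal_pow_1[OF I] by simp
    moreover have "graded_class R I 0 a \<in> carrier ?G"
      using graded_class_carrier[OF I] \<open>a \<in> carrier R\<close> by simp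
    ultimately obtain z' where z': "z' \<in> carrier ?G" "s = z' \<otimes>\<^bsub>?G\<^esub> graded_class R I 0 a"
      using zero_dim_gorenstein_local_socle_subset_cgenideal[OF G M] s(1)
      unfolding cgenideal_def by blast
    have "s r = ideal_pow R I (Suc r)"
      unfolding z'(2) by (rule assoc_graded_mult_graded_class_0_component[OF I z'(1) a])
    then have "s n = ideal_pow R I (Suc n)" for n
      using off_top by (cases "n = r") auto
    then have "s = \<zero>\<^bsub>?G\<^esub>" by (simp add: assoc_graded_zero fun_eq_iff)
    with s(2) show False ..
  qed
qed

theorem corollary3p4:
  fixes R :: "('a, 'b) ring_scheme" and I m :: "'a set" and r :: nat
  assumes "zero_dim_gorenstein_local R"
    and "maximalideal m R"
    and "ideal I R"
    and "I \<subseteq> m"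
    and "ideal_pow R I r \<noteq> {\<zero>\<^bsub>R\<^esub>}"
    and "ideal_pow R I (Suc r) = {\<zero>\<^bsub>R\<^esub>}"
    and "zero_dim_gorenstein_local (assoc_graded R I)"
  shows "\<forall>i \<le> r. faithful_over_quot R I (ideal_pow R I i) (ideal_pow R I (Suc i))"
proof (intro allI impI)
  fix i assume "i \<le> r"
  interpret cring R using assms(1) by (simp add: zero_dim_gorenstein_local_def)
  have "ann_quot R (ideal_pow R I i) (ideal_pow R I (Suc i)) \<subseteq> I"
    using ann_quot_ideal_pow_mono[OF assms(3) \<open>i \<le> r\<close>]
      ann_quot_top_ideal_pow_subset[OF assms(3,5,6,7)] by blast
  then show "faithful_over_quot R I (ideal_pow R I i) (ideal_pow R I (Suc i))"
    unfolding faithful_over_quot_def using ideal_subset_ann_quot_ideal_pow[OF assms(3)] by blast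
qed

end
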